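(* Let $A$ be an $m$-dimensional binary array of size $n_1\times\cdots\times n_m$ and $\mathbb{A}$ its periodic extension. Suppose $(\alpha_1,\omega_1)\neq(\alpha_2,\omega_2)$ are two ordered pairs of distinct dots of $A$, with $\alpha_j=(a_{j1},\dots,a_{jm})$, $\omega_j=(w_{j1},\dots,w_{jm})$, such that the toroidal vectors from $\alpha_1$ to $\omega_1$ and from $\alpha_2$ to $\omega_2$ both equal $\langle h_1,\dots,h_m\rangle$. If for every $i\in[m]$ with $h_i=n_i/2$ we have either $w_{1i}-a_{1i}=w_{2i}-a_{2i}$, or ($a_{1i}\neq w_{2i}$ and $a_{2i}\neq w_{1i}$), then there is an $n_1\times\cdots\times n_m$ window of $\mathbb{A}$ having a repeated difference vector.
   Context: For $n\in\mathbb{N}$, $[n]=\{1,\dots,n\}$. An $m$-dimensional binary array of size $n_1\times\cdots\times n_m$ ($m\ge2$, all $n_i\ge 2$) is a function $A:[n_1]\times\cdots\times[n_m]\to\{0,1\}$; a dot is a point where $A$ equals 1. The periodic extension $\mathbb{A}:\mathbb{Z}^m\to\{0,1\}$ is $\mathbb{A}(a_1,\dots,a_m)=A(a_1',\dots,a_m')$ with $a_i'\in[n_i]$, $a_i'\equiv a_i\pmod{n_i}$. An $n_1\times\cdots\times n_m$ window of $\mathbb{A}$ is the restriction of $\mathbb{A}$ to a box $\prod_i\{k_i,\dots,k_i+n_i-1\}$, $k_i\in\mathbb{Z}$. The difference vector from a dot $\alpha=(a_1,\dots,a_m)$ to a distinct dot $\omega=(w_1,\dots,w_m)$ is $\langle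 w_1-a_1,\dots,w_m-a_m\rangle\in\mathbb{Z}^m$; the toroidal vector is $\langle (w_1-a_1)\bmod n_1,\dots,(w_m-a_m)\bmod n_m\rangle$ with components in $\{0,\dots,n_i-1\}$. A window has a repeated difference vector if two distinct ordered pairs of distinct dots in it have the same difference vector. *)

theory Defs
  imports Main
begin

text \<open>The dimension is m = length n, where n :: nat list lists the sizes
  n_1,...,n_m (0-based list index i corresponds to coordinate i+1). An array A of size n_1 x ... x n_m is a predicate on points
  (True = 1 = dot); only its values on the box [n_1] x ... x [n_m] matter.\<close>

definition in_box :: "nat list \<Rightarrow> int list \<Rightarrow> bool" where
  "in_box n p \<longleftrightarrow> length p = length n \<and>
     (\<forall>i<length n. 1 \<le> p ! i \<and> p ! i \<le> int (n ! i))"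

definition is_dot :: "nat list \<Rightarrow> (int list \<Rightarrow> bool) \<Rightarrow> int list \<Rightarrow> bool" where
  "is_dot n A p \<longleftrightarrow> in_box n p \<and> A p"

definition reduce :: "nat list \<Rightarrow> int list \<Rightarrow> int list" where
  "reduce n p = map (\<lambda>i. (p ! i - 1) mod int (n ! i) + 1) [0..<length n]"

definition per_ext :: "nat list \<Rightarrow> (int list \<Rightarrow> bool) \<Rightarrow> int list \<Rightarrow> bool" where
  "per_ext n A p \<longleftrightarrow> length p = length n \<and> A (reduce n p)"

definition in_window :: "nat list \<Rightarrow> int list \<Rightarrow> int list \<Rightarrow> bool" where
  "in_window n k p \<longleftrightarrow> length p = length n \<and>
     (\<forall>i<length n. k ! i \<le> p ! i \<and> p ! i \<le> k ! i + int (n ! i) - 1)"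

definition diff_vec :: "int list \<Rightarrow> int list \<Rightarrow> int list" where
  "diff_vec a w = map2 (\<lambda>wi ai. wi - ai) w a"

definition toroidal_vec :: "nat list \<Rightarrow> int list \<Rightarrow> int list \<Rightarrow> int list" where
  "toroidal_vec n a w = map (\<lambda>i. (w ! i - a ! i) mod int (n ! i)) [0..<length n]"

definition window_has_repeated_diff ::
  "nat list \<Rightarrow> (int list \<Rightarrow> bool) \<Rightarrow> int list \<Rightarrow> bool" where
  "window_has_repeated_diff n A k \<longleftrightarrow>
     (\<exists>p1 q1 p2 q2.
        in_window n k p1 \<and> in_window n k q1 \<and> in_window n k p2 \<and> in_window n k q2 \<and>
        per_ext n A p1 \<and> per_ext n A q1 \<and> per_ext n A p2 \<and> per_ext n A q2 \<and>
        p1 \<noteq> q1 \<and> p2 \<noteq> q2 \<and> (p1, q1) \<noteq> (p2, q2) \<and>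
        diff_vec p1 q1 = diff_vec p2 q2)"

end

theory Submission
  imports Defs
begin

text \<open>Lift the two pairs from the torus to the plane coordinatewise: keep \<open>a1\<close> and put
  \<open>q1 = a1 + e\<close>, \<open>p2 = a1 + t\<close>, \<open>q2 = a1 + t + e\<close>, where \<open>e\<close> and \<open>t\<close> are the
  representatives of \<open>w1 - a1\<close> and \<open>a2 - a1\<close> of least absolute value modulo \<open>n\<^sub>i\<close>.
  The four lifts reduce to \<open>a1, w1, a2, w2\<close> and satisfy \<open>q1 - a1 = q2 - p2\<close>, so they witness a
  repeated difference vector as soon as they fit into one window, i.e. as soon as
  \<open>|e\<^sub>i| + |t\<^sub>i| < n\<^sub>i\<close> in every coordinate. This can only fail when both \<open>|e\<^sub>i|\<close> and
  \<open>|t\<^sub>i|\<close> equal \<open>n\<^sub>i/2\<close>; then \<open>w1\<^sub>i = a2\<^sub>i\<close> and \<open>w2\<^sub>i = a1\<^sub>i\<close> are forced, which the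
  hypothesis on half-size coordinates excludes.\<close>

definition centered_mod :: "int \<Rightarrow> int \<Rightarrow> int" where
  "centered_mod x N = (if 2 * (x mod N) \<le> N then x mod N else x mod N - N)"

lemma mod_centered_mod [simp]: "centered_mod x N mod N = x mod N"
  by (simp add: centered_mod_def)

lemma abs_centered_mod_le:
  assumes "N > 0" shows "2 * \<bar>centered_mod x N\<bar> \<le> N"
  using pos_mod_sign[OF assms, of x] pos_mod_bound[OF assms, of x]
  by (auto simp: centered_mod_def)

lemma mod_eq_half_if_abs_centered_mod_eq_half:
  assumes "N > 0" and "2 * \<bar>centered_mod x N\<bar> = N" shows "2 * (x mod N) = N"
proof -
  have "0 \<le> x mod N" "x mod N < N" using assms(1) by simp_all
  then show ?thesis using assms(2) unfolding centered_mod_def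
    by (cases "2 * (x mod N) \<le> N") (simp_all add: abs_if split: if_splits)
qed

lemma add_centered_mod_mod_eq [simp]: "(a + centered_mod x N) mod N = (a + x) mod N"
  by (metis mod_add_right_eq mod_centered_mod)

lemma abs_eq_half_if_mod_eq_half:
  fixes x N :: int
  assumes "\<bar>x\<bar> < N" and "2 * (x mod N) = N"
  shows "2 * \<bar>x\<bar> = N"
proof (cases "x \<ge> 0")
  case True
  then show ?thesis using assms by simp
next
  case False
  then have "x mod N = x + N"
    using assms(1) mod_pos_pos_trivial[of "x + N" N] by simp
  then show ?thesis using assms False by simp
qed

lemma abs_centered_mod_add_le:
  fixes N a1 w1 a2 w2 :: int
  assumes box: "1 \<le> a1" "a1 \<le> N" "1 \<le> w1" "w1 \<le> N" "1 \<le> a2" "a2 \<le> N" "1 \<le> w2" "w2 \<le> N"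
    and same_mod: "(w2 - a2) mod N = (w1 - a1) mod N"
    and half: "2 * ((w1 - a1) mod N) = N \<longrightarrow> w1 - a1 = w2 - a2 \<or> (a1 \<noteq> w2 \<and> a2 \<noteq> w1)"
  shows "\<bar>centered_mod (w1 - a1) N\<bar> + \<bar>centered_mod (a2 - a1) N\<bar> \<le> N - 1"
proof (rule ccontr)
  assume "\<not> ?thesis"
  moreover have "N > 0" using box by simp
  ultimately have "2 * \<bar>centered_mod (w1 - a1) N\<bar> = N" "2 * \<bar>centered_mod (a2 - a1) N\<bar> = N"
    using abs_centered_mod_le[OF \<open>N > 0\<close>, of "w1 - a1"] abs_centered_mod_le[OF \<open>N > 0\<close>, of "a2 - a1"]
    by linarith+
  then have mod_half: "2 * ((w1 - a1) mod N) = N" "2 * ((a2 - a1) mod N) = N"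
    using mod_eq_half_if_abs_centered_mod_eq_half \<open>N > 0\<close> by blast+
  then have "2 * \<bar>w1 - a1\<bar> = N" "2 * \<bar>a2 - a1\<bar> = N" "2 * \<bar>w2 - a2\<bar> = N"
    using same_mod box by (auto intro: abs_eq_half_if_mod_eq_half)
  \<comment> \<open>two steps of length N/2 inside an interval of length N - 1 must cancel\<close>
  then have "w1 = a2" "w2 = a1" using box by (simp_all add: abs_if split: if_splits)
  then show False using half mod_half \<open>N > 0\<close> by auto
qed

lemma in_window_offsets:
  fixes a :: "int list" and d e t :: "nat \<Rightarrow> int"
  assumes fits: "\<forall>i<length n. \<bar>e i\<bar> + \<bar>t i\<bar> \<le> int (n ! i) - 1"
    and d: "\<forall>i. d i \<in> {0, e i, t i, t i + e i}"
  shows "in_window n (map (\<lambda>i. a ! i + (min 0 (e i) + min 0 (t i))) [0..<length n])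
                      (map (\<lambda>i. a ! i + d i) [0..<length n])"
proof -
  have "min 0 (e i) + min 0 (t i) \<le> d i \<and> d i \<le> min 0 (e i) + min 0 (t i) + int (n ! i) - 1"
    if "i < length n" for i
  proof -
    have "\<bar>e i\<bar> + \<bar>t i\<bar> \<le> int (n ! i) - 1" "d i \<in> {0, e i, t i, t i + e i}"
      using fits d that by auto
    then show ?thesis by auto
  qed
  then show ?thesis by (simp add: in_window_def add.assoc)
qed

lemma reduce_eq_if_mod_eq:
  assumes "length p = length n" and "in_box n x"
    and "\<forall>i<length n. p ! i mod int (n ! i) = x ! i mod int (n ! i)"
  shows "reduce n p = x"
proof (rule nth_equalityI)
  show "length (reduce n p) = length x" using assms(2) by (simp add: reduce_def in_box_def)
next
  fix i assume "i < length (reduce n p)"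
  then have i: "i < length n" by (simp add: reduce_def)
  then have "(p ! i - 1) mod int (n ! i) = (x ! i - 1) mod int (n ! i)"
    using assms(3) mod_diff_cong by blast
  also have "\<dots> = x ! i - 1"
    using assms(2) i by (intro mod_pos_pos_trivial) (auto simp: in_box_def)
  finally show "reduce n p ! i = x ! i" using i by (simp add: reduce_def)
qed

lemma window_has_repeated_diffI:
  assumes "in_window n k p1" "in_window n k q1" "in_window n k p2" "in_window n k q2"
    and "is_dot n A (reduce n p1)" "is_dot n A (reduce n q1)"
      "is_dot n A (reduce n p2)" "is_dot n A (reduce n q2)"
    and "reduce n p1 \<noteq> reduce n q1" "reduce n p2 \<noteq> reduce n q2"
      "(reduce n p1, reduce n q1) \<noteq> (reduce n p2, reduce n q2)"
    and "diff_vec p1 q1 = diff_vec p2 q2"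
  shows "window_has_repeated_diff n A k"
  using assms unfolding window_has_repeated_diff_def per_ext_def is_dot_def in_window_def
  by (metis prod.inject)

theorem mainTheorem3:
  fixes n :: "nat list" and A :: "int list \<Rightarrow> bool"
    and a1 w1 a2 w2 h :: "int list"
  assumes dim: "length n \<ge> 2"
    and sizes: "\<forall>i<length n. n ! i \<ge> 2"
    and dots: "is_dot n A a1" "is_dot n A w1" "is_dot n A a2" "is_dot n A w2"
    and distinct1: "a1 \<noteq> w1" and distinct2: "a2 \<noteq> w2"
    and pairs_ne: "(a1, w1) \<noteq> (a2, w2)"
    and tor1: "toroidal_vec n a1 w1 = h"
    and tor2: "toroidal_vec n a2 w2 = h"
    and half: "\<forall>i<length n. 2 * h ! i = int (n ! i) \<longrightarrow>
                 (w1 ! i - a1 ! i = w2 ! i - a2 ! i \<or> (a1 ! i \<noteq> w2 ! i \<and> a2 ! i \<noteq> w1 ! i))"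
  shows "\<exists>k. length k = length n \<and> window_has_repeated_diff n A k"
proof -
  define e where "e i = centered_mod (w1 ! i - a1 ! i) (int (n ! i))" for i
  define t where "t i = centered_mod (a2 ! i - a1 ! i) (int (n ! i))" for i
  define lift where "lift d = map (\<lambda>i. a1 ! i + d i) [0..<length n]" for d
  define k where "k = lift (\<lambda>i. min 0 (e i) + min 0 (t i))"
  have box: "in_box n a1" "in_box n w1" "in_box n a2" "in_box n w2"
    using dots by (auto simp: is_dot_def)
  have same_mod: "(w2 ! i - a2 ! i) mod int (n ! i) = (w1 ! i - a1 ! i) mod int (n ! i)"
    if "i < length n" for i
    using tor1 tor2 that by (auto simp: toroidal_vec_def)
  have "(a1 ! i + t i + e i) mod int (n ! i) = (a2 ! i + (w2 ! i - a2 ! i)) mod int (n ! i)"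
    if "i < length n" for i
    using same_mod[OF that] by (intro mod_add_cong) (simp_all add: e_def t_def)
  then have reductions: "reduce n (lift (\<lambda>_. 0)) = a1" "reduce n (lift e) = w1"
      "reduce n (lift t) = a2" "reduce n (lift (\<lambda>i. t i + e i)) = w2"
    using box by (auto simp: lift_def intro!: reduce_eq_if_mod_eq) (simp_all add: e_def t_def add.assoc)
  have "\<bar>e i\<bar> + \<bar>t i\<bar> \<le> int (n ! i) - 1" if i: "i < length n" for i
  proof -
    have bounds: "1 \<le> a1 ! i" "a1 ! i \<le> int (n ! i)" "1 \<le> w1 ! i" "w1 ! i \<le> int (n ! i)"
      "1 \<le> a2 ! i" "a2 ! i \<le> int (n ! i)" "1 \<le> w2 ! i" "w2 ! i \<le> int (n ! i)"
      using box i by (auto simp: in_box_def)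
    have "h ! i = (w1 ! i - a1 ! i) mod int (n ! i)"
      using tor1 i by (auto simp: toroidal_vec_def)
    then show ?thesis
      unfolding e_def t_def using half i
      by (intro abs_centered_mod_add_le[OF bounds same_mod[OF i]]) simp
  qed
  then have windows: "in_window n k (lift d)" if "\<forall>i. d i \<in> {0, e i, t i, t i + e i}" for d
    unfolding k_def lift_def using that by (intro in_window_offsets) auto
  have "diff_vec (lift (\<lambda>_. 0)) (lift e) = diff_vec (lift t) (lift (\<lambda>i. t i + e i))"
    by (simp add: diff_vec_def lift_def map2_map_map)
  then have "window_has_repeated_diff n A k"
    using dots distinct1 distinct2 pairs_ne
    by (intro window_has_repeated_diffI[of n k "lift (\<lambda>_. 0)" "lift e" "lift t" "lift (\<lambda>i. t i + e i)"]
        windows) (simp_all add: reductions)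
  moreover have "length k = length n" by (simp add: k_def lift_def)
  ultimately show ?thesis by blast
qed

end
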